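(* Let $p,q$ be distinct primes and $n\geqslant1$. Then the width of $C_{p^nq}$ equals $n+1$.
   Context: For a finite group $G$, an arrow is a pair $(H,K)$ of subgroups with $H\leqslant K$; identity arrows are those with $H=K$. A $G$-transfer system is a set of arrows containing all identities and closed under composition ($(H,K),(K,L)\Rightarrow(H,L)$), conjugation ($(H,K)\Rightarrow(gHg^{-1},gKg^{-1})$) and restriction ($(H,K)$ and $L\leqslant K\Rightarrow(H\cap L,L)$). For a set $S$ of non-identity arrows, $\langle S\rangle$ is the smallest transfer system containing $S$. A minimal generating set of a transfer system $\mathsf{T}$ is a set $S\subseteq\mathsf{T}$ of non-identity arrows with $\langle S\rangle=\mathsf{T}$ and $\langle S\setminus\{s\}\rangle\neq\mathsf{T}$ for all $s\in S$; all such have the same cardinality $\mathfrak{m}(\mathsf{T})$. The width of $G$ is $\mathfrak{m}$ of the complete transfer system (consisting of all arrows). *)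

theory Defs
  imports "HOL-Algebra.Algebra"
begin

definition arrows :: "('a, 'b) monoid_scheme \<Rightarrow> ('a set \<times> 'a set) set" where
  "arrows G = {(H, K). subgroup H G \<and> subgroup K G \<and> H \<subseteq> K}"

definition conj_set :: "('a, 'b) monoid_scheme \<Rightarrow> 'a \<Rightarrow> 'a set \<Rightarrow> 'a set" where
  "conj_set G g H = (\<lambda>h. g \<otimes>\<^bsub>G\<^esub> h \<otimes>\<^bsub>G\<^esub> inv\<^bsub>G\<^esub> g) ` H"

definition transfer_system :: "('a, 'b) monoid_scheme \<Rightarrow> ('a set \<times> 'a set) set \<Rightarrow> bool" where
  "transfer_system G T \<longleftrightarrow>
     T \<subseteq> arrows G \<and>
     (\<forall>H. subgroup H G \<longrightarrow> (H, H) \<in> T) \<and>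
     (\<forall>H K L. (H, K) \<in> T \<longrightarrow> (K, L) \<in> T \<longrightarrow> (H, L) \<in> T) \<and>
     (\<forall>H K g. (H, K) \<in> T \<longrightarrow> g \<in> carrier G \<longrightarrow> (conj_set G g H, conj_set G g K) \<in> T) \<and>
     (\<forall>H K L. (H, K) \<in> T \<longrightarrow> subgroup L G \<longrightarrow> L \<subseteq> K \<longrightarrow> (H \<inter> L, L) \<in> T)"

definition ts_generated :: "('a, 'b) monoid_scheme \<Rightarrow> ('a set \<times> 'a set) set \<Rightarrow> ('a set \<times> 'a set) set" where
  "ts_generated G S = \<Inter>{T. transfer_system G T \<and> S \<subseteq> T}"

definition minimal_generating_set ::
  "('a, 'b) monoid_scheme \<Rightarrow> ('a set \<times> 'a set) set \<Rightarrow> ('a set \<times> 'a set) set \<Rightarrow> bool" where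
  "minimal_generating_set G T S \<longleftrightarrow>
     S \<subseteq> T \<and> (\<forall>s\<in>S. fst s \<noteq> snd s) \<and> ts_generated G S = T \<and>
     (\<forall>s\<in>S. ts_generated G (S - {s}) \<noteq> T)"

(* m(T): the common cardinality of the minimal generating sets of T *)
definition mgen_card :: "('a, 'b) monoid_scheme \<Rightarrow> ('a set \<times> 'a set) set \<Rightarrow> nat" where
  "mgen_card G T = card (SOME S. minimal_generating_set G T S)"

definition width :: "('a, 'b) monoid_scheme \<Rightarrow> nat" where
  "width G = mgen_card G (arrows G)"

end

theory Submission
  imports Defs
begin

text \<open>The subgroups of the cyclic group of order \<open>p\<^sup>n q\<close> are its torsion subgroups
  \<open>G[p\<^sup>i q\<^sup>j]\<close>, \<open>i \<le> n\<close>, \<open>j \<le> 1\<close>, ordered like the grid of exponents. In an abelian group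
  a set \<open>S\<close> generating all arrows must, for every covering pair \<open>A \<subset> B\<close>, contain an arrow
  \<open>(H, K)\<close> with \<open>B \<subseteq> K\<close> and \<open>H \<inter> B = A\<close>. For the \<open>n\<close> covers along the top row of the grid
  and the cover \<open>G[p\<^sup>n] \<subset> G\<close> this forces \<open>H = A\<close>, so \<open>S\<close> needs \<open>n + 1\<close> arrows with
  distinct sources; conversely these \<open>n + 1\<close> covers generate every arrow by restriction and
  composition.\<close>

section \<open>Generating transfer systems of abelian groups\<close>

lemma conj_set_abelian:
  fixes G (structure)
  assumes "comm_group G" "H \<subseteq> carrier G" "g \<in> carrier G"
  shows "conj_set G g H = H"
proof -
  interpret comm_group G by fact
  have "g \<otimes> h \<otimes> inv g = h" if "h \<in> H" for h
  proof -
    have h: "h \<in> carrier G" using that assms(2) by auto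
    then have "g \<otimes> h \<otimes> inv g = h \<otimes> g \<otimes> inv g" using assms(3) by (simp add: m_comm)
    also have "\<dots> = h" using h assms(3) by (simp add: m_assoc)
    finally show ?thesis .
  qed
  then show ?thesis
    unfolding conj_set_def by (simp add: image_def)
qed

lemma transfer_system_arrows:
  assumes "comm_group G"
  shows "transfer_system G (arrows G)"
  unfolding transfer_system_def
proof (intro conjI allI impI)
  fix H K g assume "(H, K) \<in> arrows G" "g \<in> carrier G"
  then show "(conj_set G g H, conj_set G g K) \<in> arrows G"
    using conj_set_abelian[OF assms] by (simp add: arrows_def subgroup.subset)
next
  fix H K L assume "(H, K) \<in> arrows G" "subgroup L G" "L \<subseteq> K"
  then show "(H \<inter> L, L) \<in> arrows G"
    using assms by (auto simp: arrows_def comm_group_def intro: group.subgroups_Inter_pair)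
qed (auto simp: arrows_def)

lemma ts_generated_least:
  "transfer_system G T \<Longrightarrow> S \<subseteq> T \<Longrightarrow> ts_generated G S \<subseteq> T"
  unfolding ts_generated_def by blast

lemma ts_generated_superset: "S \<subseteq> ts_generated G S"
  unfolding ts_generated_def by blast

lemma transfer_system_ts_generated:
  assumes "transfer_system G T" "S \<subseteq> T"
  shows "transfer_system G (ts_generated G S)"
  unfolding transfer_system_def
proof (intro conjI allI impI)
  show "ts_generated G S \<subseteq> arrows G"
    using assms ts_generated_least unfolding transfer_system_def by blast
qed (unfold ts_generated_def transfer_system_def; blast)+

lemma transfer_system_refl: "transfer_system G T \<Longrightarrow> subgroup H G \<Longrightarrow> (H, H) \<in> T"
  unfolding transfer_system_def by blast

lemma transfer_system_trans:
  "transfer_system G T \<Longrightarrow> (H, K) \<in> T \<Longrightarrow> (K, L) \<in> T \<Longrightarrow> (H, L) \<in> T"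
  unfolding transfer_system_def by blast

lemma transfer_system_restrict:
  "transfer_system G T \<Longrightarrow> (H, K) \<in> T \<Longrightarrow> subgroup L G \<Longrightarrow> L \<subseteq> K \<Longrightarrow> (H \<inter> L, L) \<in> T"
  unfolding transfer_system_def by blast

lemma transfer_system_chain:
  assumes "transfer_system G T" "subgroup (f i) G" "i \<le> j"
    and "\<And>k. i \<le> k \<Longrightarrow> k < j \<Longrightarrow> (f k, f (Suc k)) \<in> T"
  shows "(f i, f j) \<in> T"
proof -
  have "(f i, f (i + m)) \<in> T" if "i + m \<le> j" for m
    using that
  proof (induction m)
    case 0
    show ?case using transfer_system_refl[OF assms(1,2)] by simp
  next
    case (Suc m)
    then have "(f i, f (i + m)) \<in> T" "(f (i + m), f (Suc (i + m))) \<in> T"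
      using assms(4) by auto
    then show ?case using transfer_system_trans[OF assms(1)] by simp
  qed
  from this[of "j - i"] show ?thesis using assms(3) by simp
qed

lemma arrows_subset_if_arrows_to_carrier:
  assumes T: "transfer_system G T" and top: "\<And>H. subgroup H G \<Longrightarrow> (H, carrier G) \<in> T"
  shows "arrows G \<subseteq> T"
proof
  fix x assume "x \<in> arrows G"
  then obtain H K where x: "x = (H, K)" and H: "subgroup H G" and K: "subgroup K G" "H \<subseteq> K"
    by (auto simp: arrows_def)
  have "(H \<inter> K, K) \<in> T"
    using transfer_system_restrict[OF T top[OF H] K(1) subgroup.subset[OF K(1)]] .
  then show "x \<in> T" using x K(2) by (simp add: Int_absorb2)
qed

definition covering :: "('a, 'b) monoid_scheme \<Rightarrow> 'a set \<Rightarrow> 'a set \<Rightarrow> bool" where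
  "covering G A B \<longleftrightarrow> subgroup A G \<and> subgroup B G \<and> A \<subset> B \<and>
     (\<forall>M. subgroup M G \<longrightarrow> A \<subseteq> M \<longrightarrow> M \<subseteq> B \<longrightarrow> M = A \<or> M = B)"

lemma covering_witness:
  assumes G: "comm_group G" and S: "S \<subseteq> arrows G"
    and AB: "(A, B) \<in> ts_generated G S" and cov: "covering G A B"
  shows "\<exists>(H, K)\<in>S. B \<subseteq> K \<and> H \<inter> B = A"
proof (rule ccontr)
  assume no_witness: "\<not> ?thesis"
  \<comment> \<open>The arrows not witnessing the cover form a transfer system: an arrow through \<open>K\<close>
    witnessing it would make \<open>K \<inter> B\<close>, which lies between \<open>A\<close> and \<open>B\<close>, a witness of one factor.\<close>
  define T where "T = {(H, K) \<in> arrows G. \<not> (B \<subseteq> K \<and> H \<inter> B = A)}"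
  have B: "subgroup B G" and "A \<subset> B" using cov by (auto simp: covering_def)
  have "transfer_system G T"
    unfolding transfer_system_def
  proof (intro conjI allI impI)
    show "T \<subseteq> arrows G" by (auto simp: T_def)
  next
    fix H assume "subgroup H G"
    then show "(H, H) \<in> T" using \<open>A \<subset> B\<close> by (auto simp: T_def arrows_def)
  next
    fix H K L assume HK: "(H, K) \<in> T" and KL: "(K, L) \<in> T"
    have "\<not> (B \<subseteq> L \<and> H \<inter> B = A)"
    proof
      assume "B \<subseteq> L \<and> H \<inter> B = A"
      moreover have "subgroup (K \<inter> B) G"
        using KL B G by (auto simp: T_def arrows_def comm_group_def intro: group.subgroups_Inter_pair)
      moreover have "H \<subseteq> K" using HK by (simp add: T_def arrows_def)
      ultimately have "K \<inter> B = A \<or> K \<inter> B = B"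
        using cov unfolding covering_def by blast
      then show False using HK KL \<open>B \<subseteq> L \<and> H \<inter> B = A\<close> by (auto simp: T_def)
    qed
    then show "(H, L) \<in> T" using HK KL by (auto simp: T_def arrows_def)
  next
    fix H K g assume "(H, K) \<in> T" "g \<in> carrier G"
    moreover have "H \<subseteq> carrier G" "K \<subseteq> carrier G"
      using \<open>(H, K) \<in> T\<close> by (auto simp: T_def arrows_def subgroup.subset)
    ultimately show "(conj_set G g H, conj_set G g K) \<in> T"
      using conj_set_abelian[OF G] by simp
  next
    fix H K L assume HK: "(H, K) \<in> T" and L: "subgroup L G" "L \<subseteq> K"
    have "subgroup (H \<inter> L) G"
      using HK L G by (auto simp: T_def arrows_def comm_group_def intro: group.subgroups_Inter_pair)
    moreover have "\<not> (B \<subseteq> L \<and> H \<inter> L \<inter> B = A)"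
      using HK L(2) by (auto simp: T_def)
    ultimately show "(H \<inter> L, L) \<in> T" using L by (auto simp: T_def arrows_def)
  qed
  moreover have "S \<subseteq> T"
    using no_witness S by (auto simp: T_def)
  ultimately have "(A, B) \<in> T"
    using ts_generated_least AB by blast
  then show False using \<open>A \<subset> B\<close> by (auto simp: T_def)
qed

locale covering_basis = comm_group G for G (structure) +
  fixes C :: "('a set \<times> 'a set) set"
  assumes covering: "(A, B) \<in> C \<Longrightarrow> covering G A B"
    and source_unique: "(A, B) \<in> C \<Longrightarrow> subgroup H G \<Longrightarrow> H \<inter> B = A \<Longrightarrow> H = A"
    and inj_on_fst: "inj_on fst C"
    and complete: "transfer_system G T \<Longrightarrow> C \<subseteq> T \<Longrightarrow> arrows G \<subseteq> T"
begin

definition lifts :: "('a set \<times> 'a set) set \<Rightarrow> bool" where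
  "lifts S \<longleftrightarrow> (\<forall>(A, B)\<in>C. \<exists>K. (A, K) \<in> S \<and> B \<subseteq> K)"

lemma basis_subset_arrows: "C \<subseteq> arrows G"
proof clarify
  fix A B assume "(A, B) \<in> C"
  then show "(A, B) \<in> arrows G" using covering[of A B] by (auto simp: covering_def arrows_def)
qed

lemma generates_iff_lifts:
  assumes S: "S \<subseteq> arrows G"
  shows "ts_generated G S = arrows G \<longleftrightarrow> lifts S"
proof
  assume gen: "ts_generated G S = arrows G"
  show "lifts S"
    unfolding lifts_def
  proof clarify
    fix A B assume AB: "(A, B) \<in> C"
    then have "(A, B) \<in> ts_generated G S" using gen basis_subset_arrows by auto
    then obtain H K where HK: "(H, K) \<in> S" "B \<subseteq> K" "H \<inter> B = A"
      using covering_witness[OF comm_group_axioms S _ covering[OF AB]] by auto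
    moreover have "subgroup H G" using HK(1) S by (auto simp: arrows_def)
    ultimately have "H = A" using source_unique[OF AB] by blast
    then show "\<exists>K. (A, K) \<in> S \<and> B \<subseteq> K" using HK(1,2) by auto
  qed
next
  assume lifts: "lifts S"
  have ts: "transfer_system G (ts_generated G S)"
    using transfer_system_ts_generated[OF transfer_system_arrows[OF comm_group_axioms] S] .
  have "C \<subseteq> ts_generated G S"
  proof clarify
    fix A B assume AB: "(A, B) \<in> C"
    then obtain K where "(A, K) \<in> S" "B \<subseteq> K" using lifts unfolding lifts_def by auto
    moreover have "subgroup B G" "A \<subseteq> B" using covering[OF AB] by (auto simp: covering_def)
    moreover have "(A, K) \<in> ts_generated G S" using ts_generated_superset \<open>(A, K) \<in> S\<close> by blast
    ultimately have "(A \<inter> B, B) \<in> ts_generated G S"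
      using transfer_system_restrict[OF ts] by blast
    then show "(A, B) \<in> ts_generated G S" using \<open>A \<subseteq> B\<close> by (simp add: Int_absorb2)
  qed
  then have "arrows G \<subseteq> ts_generated G S" by (rule complete[OF ts])
  moreover have "ts_generated G S \<subseteq> arrows G"
    using ts_generated_least[OF transfer_system_arrows[OF comm_group_axioms] S] .
  ultimately show "ts_generated G S = arrows G" by (rule antisym[rotated])
qed

lemma minimal_generating_set_basis: "minimal_generating_set G (arrows G) C"
  unfolding minimal_generating_set_def
proof (intro conjI ballI)
  show "C \<subseteq> arrows G" by (rule basis_subset_arrows)
  show "ts_generated G C = arrows G"
    using generates_iff_lifts[OF basis_subset_arrows] by (force simp: lifts_def)
next
  fix c assume c: "c \<in> C"
  then show "fst c \<noteq> snd c" using covering[of "fst c" "snd c"] by (auto simp: covering_def)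
  have "\<not> lifts (C - {c})"
  proof
    assume "lifts (C - {c})"
    then obtain K where "(fst c, K) \<in> C - {c}"
      using c unfolding lifts_def by fastforce
    then show False using inj_onD[OF inj_on_fst, of "(fst c, K)" c] c by auto
  qed
  then show "ts_generated G (C - {c}) \<noteq> arrows G"
    using generates_iff_lifts basis_subset_arrows by blast
qed

lemma card_minimal_generating_set:
  assumes "minimal_generating_set G (arrows G) S"
  shows "card S = card C"
proof -
  have S: "S \<subseteq> arrows G" and gen: "ts_generated G S = arrows G"
    and minimal: "\<And>s. s \<in> S \<Longrightarrow> ts_generated G (S - {s}) \<noteq> arrows G"
    using assms unfolding minimal_generating_set_def by auto
  have "\<forall>c\<in>C. \<exists>s. s \<in> S \<and> fst s = fst c \<and> snd c \<subseteq> snd s"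
    using gen generates_iff_lifts[OF S] unfolding lifts_def by fastforce
  from bchoice[OF this] obtain w
    where w: "\<forall>c\<in>C. w c \<in> S \<and> fst (w c) = fst c \<and> snd c \<subseteq> snd (w c)" ..
  have lifts_w: "lifts R" if "w ` C \<subseteq> R" for R
    unfolding lifts_def
  proof clarify
    fix A B assume "(A, B) \<in> C"
    then show "\<exists>K. (A, K) \<in> R \<and> B \<subseteq> K"
      using w that by (metis fst_conv image_subset_iff prod.collapse snd_conv)
  qed
  have wC: "w ` C \<subseteq> S" using w by blast
  have "S = w ` C"
  proof (rule ccontr)
    assume "S \<noteq> w ` C"
    then obtain s where s: "s \<in> S" "s \<notin> w ` C" using wC by blast
    then have "lifts (S - {s})" using wC by (intro lifts_w) blast
    then have "ts_generated G (S - {s}) = arrows G"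
      using generates_iff_lifts[of "S - {s}"] S by blast
    then show False using minimal s(1) by blast
  qed
  moreover have "inj_on w C"
  proof (rule inj_onI)
    fix c d assume "c \<in> C" "d \<in> C" "w c = w d"
    then have "fst c = fst d" using w by metis
    then show "c = d" using inj_onD[OF inj_on_fst] \<open>c \<in> C\<close> \<open>d \<in> C\<close> by blast
  qed
  ultimately show ?thesis by (simp add: card_image)
qed

theorem width_eq_card: "width G = card C"
proof -
  have "minimal_generating_set G (arrows G) (SOME S. minimal_generating_set G (arrows G) S)"
    using minimal_generating_set_basis by (rule someI)
  then show ?thesis
    unfolding width_def mgen_card_def by (rule card_minimal_generating_set)
qed

end

section \<open>Subgroups of finite cyclic groups\<close>

definition torsion :: "('a, 'b) monoid_scheme \<Rightarrow> nat \<Rightarrow> 'a set" where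
  "torsion G d = {x \<in> carrier G. x [^]\<^bsub>G\<^esub> d = \<one>\<^bsub>G\<^esub>}"

lemma (in comm_group) subgroup_torsion: "subgroup (torsion G d) G"
proof (rule subgroupI)
  show "torsion G d \<subseteq> carrier G" "torsion G d \<noteq> {}"
    unfolding torsion_def by force+
next
  fix x assume "x \<in> torsion G d"
  then show "inv x \<in> torsion G d" by (simp add: torsion_def nat_pow_inv)
next
  fix x y assume "x \<in> torsion G d" "y \<in> torsion G d"
  then show "x \<otimes> y \<in> torsion G d" by (simp add: torsion_def pow_mult_distrib m_comm)
qed

lemma (in group) torsion_Int: "torsion G a \<inter> torsion G b = torsion G (gcd a b)"
  unfolding torsion_def using pow_eq_id by auto

lemma (in group) torsion_mono: "a dvd b \<Longrightarrow> torsion G a \<subseteq> torsion G b"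
  unfolding torsion_def using pow_eq_id dvd_trans by blast

lemma (in group) torsion_order: "torsion G (order G) = carrier G"
  unfolding torsion_def using pow_order_eq_1 by auto

lemma (in group) subgroup_subset_torsion_card:
  assumes "subgroup H G"
  shows "H \<subseteq> torsion G (card H)"
proof
  interpret H: group "G\<lparr>carrier := H\<rparr>" using subgroup_imp_group[OF assms] .
  fix x assume x: "x \<in> H"
  have "x [^]\<^bsub>G\<lparr>carrier := H\<rparr>\<^esub> order (G\<lparr>carrier := H\<rparr>) = \<one>"
    using H.pow_order_eq_1 x by simp
  then have "x [^] card H = \<one>"
    unfolding order_def by (simp add: nat_pow_consistent[symmetric])
  then show "x \<in> torsion G (card H)"
    unfolding torsion_def using x subgroup.subset[OF assms] by auto
qed

locale finite_cyclic_group = group G for G (structure) +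
  assumes cyclic: "cyclic_group G" and finite_carrier: "finite (carrier G)"
begin

sublocale comm_group G
  by (rule cyclic_imp_abelian_group[OF cyclic])

lemma generator_pow_bij:
  obtains g where "g \<in> carrier G" "ord g = order G"
    and "bij_betw (\<lambda>k::nat. g [^] k) {..<order G} (carrier G)"
proof -
  obtain g where g: "g \<in> carrier G" "subgroup_generated G {g} = G"
    using cyclic unfolding cyclic_group_def by blast
  have ord: "ord g = order G" using cyclic_order_is_ord[OF g(1)] g(2) by simp
  have range: "{0..ord g - 1} = {..<order G}"
    using ord ord_ge_1[OF finite_carrier g(1)] by auto
  have "carrier G = carrier (subgroup_generated G {g})" using g(2) by simp
  also have "\<dots> = generate G {g}" using g(1) by (simp add: carrier_subgroup_generated)
  also have "\<dots> = {g [^] k | k. k \<in> (UNIV :: nat set)}"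
    using generate_pow_on_finite_carrier[OF finite_carrier g(1)] .
  also have "\<dots> = {g [^] k | k. k \<in> {0..ord g - 1}}"
    using ord_elems[OF finite_carrier g(1)] .
  also have "\<dots> = (\<lambda>k. g [^] k) ` {..<order G}"
    unfolding range by auto
  finally have "bij_betw (\<lambda>k::nat. g [^] k) {..<order G} (carrier G)"
    using ord_inj[OF g(1)] unfolding range bij_betw_def by simp
  with g(1) ord show ?thesis by (rule that)
qed

lemma card_torsion:
  assumes "d dvd order G"
  shows "card (torsion G d) = d"
proof -
  obtain g where g: "g \<in> carrier G" "ord g = order G"
    and bij: "bij_betw (\<lambda>k::nat. g [^] k) {..<order G} (carrier G)"
    by (rule generator_pow_bij)
  obtain m where N: "order G = m * d" using assms by (metis dvd_div_mult_self)
  have pos: "m > 0" "d > 0"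
    using N order_gt_0_iff_finite finite_carrier by (metis nat_0_less_mult_iff)+
  have "g [^] k \<in> torsion G d \<longleftrightarrow> m dvd k" for k :: nat
  proof -
    have "g [^] k \<in> torsion G d \<longleftrightarrow> m * d dvd k * d"
      using g N by (simp add: torsion_def nat_pow_pow pow_eq_id)
    also have "\<dots> \<longleftrightarrow> m dvd k" using pos by simp
    finally show ?thesis .
  qed
  moreover have "torsion G d \<subseteq> (\<lambda>k. g [^] k) ` {..<order G}"
    using bij subgroup.subset[OF subgroup_torsion] by (simp add: bij_betw_def)
  ultimately have "torsion G d = (\<lambda>k. g [^] k) ` {k \<in> {..<order G}. m dvd k}"
    by auto
  moreover have "inj_on (\<lambda>k. g [^] k) {k \<in> {..<order G}. m dvd k}"
    by (rule inj_on_subset[OF bij_betw_imp_inj_on[OF bij]]) auto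
  ultimately have "card (torsion G d) = card {k \<in> {..<order G}. m dvd k}"
    by (simp add: card_image)
  also have "{k \<in> {..<order G}. m dvd k} = (\<lambda>j. m * j) ` {..<d}"
    using N pos by (auto elim!: dvdE)
  also have "card \<dots> = d"
    using pos by (simp add: card_image inj_on_def)
  finally show ?thesis .
qed

lemma subgroup_eq_torsion_card:
  assumes "subgroup H G"
  shows "H = torsion G (card H)"
proof (rule card_subset_eq)
  show "finite (torsion G (card H))"
    using finite_carrier by (simp add: torsion_def)
  show "H \<subseteq> torsion G (card H)" using subgroup_subset_torsion_card[OF assms] .
  have "card H dvd order G" using lagrange[OF assms] by (metis dvd_triv_right)
  then show "card H = card (torsion G (card H))" by (simp add: card_torsion)
qed

lemma torsion_subset_iff:
  assumes "a dvd order G" "b dvd order G"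
  shows "torsion G a \<subseteq> torsion G b \<longleftrightarrow> a dvd b"
proof
  assume "torsion G a \<subseteq> torsion G b"
  then have "torsion G a = torsion G (gcd a b)" using torsion_Int by blast
  moreover have "gcd a b dvd order G" using assms(1) by (meson dvd_trans gcd_dvd1)
  ultimately have "a = gcd a b" using assms(1) card_torsion by metis
  then show "a dvd b" by (metis gcd_dvd2)
qed (rule torsion_mono)

end

section \<open>The cyclic group of order \<open>p\<^sup>n q\<close>\<close>

lemma dvd_prime_power_mult_prime:
  fixes p q d n :: nat
  assumes "Factorial_Ring.prime p" "Factorial_Ring.prime q" "d dvd p ^ n * q"
  shows "\<exists>i\<le>n. \<exists>j\<le>1. d = p ^ i * q ^ j"
proof -
  obtain b c where d: "d = b * c" "b dvd p ^ n" "c dvd q"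
    using division_decomp[OF assms(3)] by blast
  obtain i where "i \<le> n" "b = p ^ i"
    using d(2) divides_primepow_nat[OF assms(1)] by blast
  moreover obtain j where "j \<le> (1::nat)" "c = q ^ j"
    using d(3) assms(2) prime_nat_iff by (metis power_0 power_one_right le_refl zero_le)
  ultimately show ?thesis using d(1) by blast
qed

lemma prime_powers_mult_dvd_iff:
  fixes p q :: nat
  assumes p: "Factorial_Ring.prime p" and q: "Factorial_Ring.prime q" and "p \<noteq> q"
  shows "p ^ i * q ^ j dvd p ^ a * q ^ b \<longleftrightarrow> i \<le> a \<and> j \<le> b"
proof
  have coprime: "coprime (p ^ k) (q ^ l)" for k l
    using primes_coprime[OF p q \<open>p \<noteq> q\<close>] by simp
  assume dvd: "p ^ i * q ^ j dvd p ^ a * q ^ b"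
  then have "p ^ i dvd p ^ a"
    using coprime coprime_dvd_mult_left_iff dvd_mult_left by blast
  moreover have "q ^ j dvd q ^ b"
    using dvd coprime[THEN coprime_commute[THEN iffD1]] coprime_dvd_mult_right_iff dvd_mult_right
    by metis
  ultimately show "i \<le> a \<and> j \<le> b"
    using dvd_power_iff_le prime_ge_2_nat[OF p] prime_ge_2_nat[OF q] by auto
qed (simp add: le_imp_power_dvd mult_dvd_mono)

lemma gcd_prime_power_prime_power_mult:
  fixes p q :: nat
  assumes "Factorial_Ring.prime p" "Factorial_Ring.prime q" "p \<noteq> q" "i \<le> n"
  shows "gcd (p ^ n) (p ^ i * q) = p ^ i"
proof -
  have "coprime (p ^ n) q" using primes_coprime[OF assms(1-3)] by simp
  then have "gcd (p ^ n) (p ^ i * q) = gcd (p ^ n) (p ^ i)"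
    by (rule gcd_mult_right_right_cancel)
  also have "\<dots> = p ^ i"
    using assms(4) by (simp add: le_imp_power_dvd gcd_nat.absorb2)
  finally show ?thesis .
qed

locale cyclic_group_pnq = finite_cyclic_group G for G (structure) +
  fixes p q n :: nat
  assumes prime_p: "Factorial_Ring.prime p" and prime_q: "Factorial_Ring.prime q"
    and distinct_primes: "p \<noteq> q" and order_eq: "order G = p ^ n * q"
begin

definition grid :: "nat \<Rightarrow> nat \<Rightarrow> 'a set" where
  "grid i j = torsion G (p ^ i * q ^ j)"

lemma subgroup_grid: "subgroup (grid i j) G"
  unfolding grid_def by (rule subgroup_torsion)

lemma grid_dvd_order: "i \<le> n \<Longrightarrow> j \<le> 1 \<Longrightarrow> p ^ i * q ^ j dvd order G"
  using prime_powers_mult_dvd_iff[OF prime_p prime_q distinct_primes, of i j n 1] order_eq by simp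

lemma grid_subset_iff:
  assumes "i \<le> n" "j \<le> 1" "i' \<le> n" "j' \<le> 1"
  shows "grid i j \<subseteq> grid i' j' \<longleftrightarrow> i \<le> i' \<and> j \<le> j'"
  unfolding grid_def
  using torsion_subset_iff[OF grid_dvd_order grid_dvd_order] assms
    prime_powers_mult_dvd_iff[OF prime_p prime_q distinct_primes] by simp

lemma grid_eq_iff:
  assumes "i \<le> n" "j \<le> 1" "i' \<le> n" "j' \<le> 1"
  shows "grid i j = grid i' j' \<longleftrightarrow> i = i' \<and> j = j'"
  using grid_subset_iff[OF assms] grid_subset_iff[OF assms(3,4,1,2)] by auto

lemma subgroup_in_grid:
  assumes "subgroup H G"
  obtains i j where "i \<le> n" "j \<le> 1" "H = grid i j"
proof -
  have "card H dvd p ^ n * q"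
    using lagrange[OF assms] order_eq by (metis dvd_triv_right)
  then obtain i j where "i \<le> n" "j \<le> 1" "card H = p ^ i * q ^ j"
    using dvd_prime_power_mult_prime[OF prime_p prime_q] by blast
  moreover have "H = grid i j"
    unfolding grid_def using subgroup_eq_torsion_card[OF assms] \<open>card H = p ^ i * q ^ j\<close> by simp
  ultimately show ?thesis using that by blast
qed

lemma grid_top: "grid n 1 = carrier G"
  unfolding grid_def using torsion_order order_eq by simp

lemma grid_Int_bottom_row: "i \<le> n \<Longrightarrow> grid n 0 \<inter> grid i 1 = grid i 0"
  unfolding grid_def torsion_Int
  using gcd_prime_power_prime_power_mult[OF prime_p prime_q distinct_primes] by simp

lemma covering_grid:
  assumes "i' \<le> n" "j' \<le> 1" "i \<le> i'" "j \<le> j'" "i' + j' = Suc (i + j)"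
  shows "covering G (grid i j) (grid i' j')"
  unfolding covering_def
proof (intro conjI allI impI)
  show "subgroup (grid i j) G" "subgroup (grid i' j') G" by (fact subgroup_grid)+
  show "grid i j \<subset> grid i' j'"
    using assms grid_subset_iff[of i j i' j'] grid_eq_iff[of i j i' j'] by auto
next
  fix M assume M: "subgroup M G" "grid i j \<subseteq> M" "M \<subseteq> grid i' j'"
  obtain a b where ab: "a \<le> n" "b \<le> 1" "M = grid a b"
    using subgroup_in_grid[OF M(1)] .
  have "i \<le> a" "j \<le> b" "a \<le> i'" "b \<le> j'"
    using M(2,3) assms grid_subset_iff ab by auto
  then have "a = i \<and> b = j \<or> a = i' \<and> b = j'" using assms(5) by linarith
  then show "M = grid i j \<or> M = grid i' j'" using ab(3) by blast
qed

definition covers :: "('a set \<times> 'a set) set" where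
  "covers = (\<lambda>i. (grid i 1, grid (Suc i) 1)) ` {..<n} \<union> {(grid n 0, grid n 1)}"

lemma covering_covers: "(A, B) \<in> covers \<Longrightarrow> covering G A B"
  unfolding covers_def using covering_grid by auto

lemma covers_source_unique:
  assumes AB: "(A, B) \<in> covers" and H: "subgroup H G" and HB: "H \<inter> B = A"
  shows "H = A"
proof -
  from AB consider (row) i where "i < n" "A = grid i 1" "B = grid (Suc i) 1"
    | (column) "A = grid n 0" "B = grid n 1"
    unfolding covers_def by blast
  then show ?thesis
  proof cases
    case (row i)
    obtain a b where ab: "a \<le> n" "b \<le> 1" "H = grid a b"
      using subgroup_in_grid[OF H] .
    have "grid i 1 \<subseteq> H" using HB row by blast
    then have "i \<le> a" "b = 1" using grid_subset_iff ab row by auto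
    moreover have "a \<le> i"
    proof (rule ccontr)
      assume "\<not> a \<le> i"
      then have "B \<subseteq> H" using grid_subset_iff ab row \<open>b = 1\<close> by auto
      then have "grid (Suc i) 1 = grid i 1" using HB row by blast
      then show False using grid_eq_iff row by simp
    qed
    ultimately show "H = A" using ab row by simp
  next
    case column
    then show "H = A" using HB H grid_top subgroup.subset by blast
  qed
qed

lemma inj_on_fst_covers: "inj_on fst covers"
  unfolding covers_def inj_on_def using grid_eq_iff by auto

lemma card_covers: "card covers = n + 1"
proof -
  have "inj_on (\<lambda>i. (grid i 1, grid (Suc i) 1)) {..<n}"
    by (rule inj_onI) (simp add: grid_eq_iff)
  moreover have "(grid n 0, grid n 1) \<notin> (\<lambda>i. (grid i 1, grid (Suc i) 1)) ` {..<n}"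
    using grid_eq_iff by auto
  ultimately show ?thesis
    unfolding covers_def by (simp add: card_image)
qed

lemma covers_complete:
  assumes T: "transfer_system G T" and covers: "covers \<subseteq> T"
  shows "arrows G \<subseteq> T"
proof (rule arrows_subset_if_arrows_to_carrier[OF T])
  have top_row: "(grid i 1, carrier G) \<in> T" if "i \<le> n" for i
    using transfer_system_chain[where f = "\<lambda>i. grid i 1", OF T subgroup_grid that]
      covers grid_top unfolding covers_def by auto
  have bottom_row: "(grid i 0, carrier G) \<in> T" if "i \<le> n" for i
  proof -
    have "(grid n 0, grid n 1) \<in> T" using covers unfolding covers_def by auto
    then have "(grid n 0 \<inter> grid i 1, grid i 1) \<in> T"
      using transfer_system_restrict[OF T _ subgroup_grid] grid_subset_iff that by simp
    then show ?thesis
      using transfer_system_trans[OF T _ top_row[OF that]] grid_Int_bottom_row[OF that] by simp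
  qed
  fix H assume "subgroup H G"
  then obtain i j where "i \<le> n" "j \<le> 1" "H = grid i j" by (rule subgroup_in_grid)
  then show "(H, carrier G) \<in> T"
    using top_row bottom_row by (cases j) auto
qed

theorem width_eq: "width G = n + 1"
proof -
  interpret covering_basis G covers
    by unfold_locales
      (fact covering_covers covers_source_unique inj_on_fst_covers covers_complete)+
  show ?thesis using width_eq_card card_covers by simp
qed

end

theorem lemma6p1:
  fixes G :: "('a, 'b) monoid_scheme" and p q n :: nat
  assumes "group G" and "cyclic_group G"
    and "Factorial_Ring.prime p" and "Factorial_Ring.prime q" and "p \<noteq> q" and "n \<ge> 1"
    and "order G = p ^ n * q"
  shows "width G = n + 1"
proof -
  interpret group G by fact
  have "order G > 0" using assms(3,4,7) by (simp add: prime_gt_0_nat)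
  then have "finite (carrier G)" by (simp add: order_gt_0_iff_finite)
  interpret cyclic_group_pnq G p q n
    by unfold_locales (use assms \<open>finite (carrier G)\<close> in auto)
  show ?thesis by (rule width_eq)
qed

end
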